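(* Let $\beta>1$ and $n\ge1$. Let $e_k$ denote the edge between $1_{k-1}$ and $1_k$ (with $1_0=\varnothing$), for $k=1,\dots,n$. For $E\subset\{e_1,\dots,e_n\}$ let $a(E)=\mathbb{P}(\sum_{e\in E}V_e^{-1}\le t)$, where $t>0$ is fixed. Then for every non-empty $E\subset\{e_1,\dots,e_n\}$, $$a(E)\le\sum_{F}\mathbb{P}\Big(V_F\ge\frac{\#E}{t}\Big)\,a(E\setminus F),$$ where the sum runs over the non-empty subsets $F\subset E$ that are connected in $E$. Here $F$ is connected in $E$ if, whenever $e_i,e_j\in F$ with $i\le j$ and $k\in[i,j]$ satisfies $e_k\in E$, we have $e_k\in F$. $V_F$ denotes the largest speed of a road whose line contains every edge of $F$.
   Context: $\mathbb{T}$ is the $3$-regular tree with graph distance $d$ and root $\varnothing$, in Ulam–Harris labelling. $1_k$ is the vertex $1\cdots1$ ($k$ ones). A line is the vertex set of a bi-infinite geodesic, and $\mathbb{L}$ is the set of lines. $\mu$ is the unique automorphism-invariant Borel measure on $\mathbb{L}$ with $\mu\{\ell\ni x,y\}=2^{-d(x,y)}$ for $x\neq y$. $\Pi$ is a Poisson process on $\mathbb{L}\times(0,\infty)$ with intensity $(\beta-1)\mu\otimes v^{-\beta}\mathrm{d}v$; its atoms $(\ell,v)$ are roads with speed $v$. For an edge $e$, $V_e$ is the largest speed of a road whose line contains $e$. The maximum over an empty set of roads is taken to be $0$. *)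

theory Defs
  imports "HOL-Probability.Probability"
begin

section \<open>The 3-regular tree in Ulam--Harris labelling\<close>

definition tverts :: "nat list set" where
  "tverts = {xs. (xs \<noteq> [] \<longrightarrow> hd xs \<in> {1,2,3}) \<and> (\<forall>a\<in>set (tl xs). a \<in> {1,2})}"

definition tadj :: "nat list \<Rightarrow> nat list \<Rightarrow> bool" where
  "tadj x y \<longleftrightarrow> x \<in> tverts \<and> y \<in> tverts \<and> (\<exists>a. y = x @ [a] \<or> x = y @ [a])"

definition twalk :: "nat list list \<Rightarrow> nat list \<Rightarrow> nat list \<Rightarrow> nat \<Rightarrow> bool" where
  "twalk p x y n \<longleftrightarrow> length p = Suc n \<and> p ! 0 = x \<and> p ! n = y \<and> x \<in> tverts
     \<and> (\<forall>i<n. tadj (p ! i) (p ! Suc i))"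

definition tdist :: "nat list \<Rightarrow> nat list \<Rightarrow> nat" where
  "tdist x y = (LEAST n. \<exists>p. twalk p x y n)"

definition tlines :: "nat list set set" where
  "tlines = {range f | f :: int \<Rightarrow> nat list.
      (\<forall>i. f i \<in> tverts) \<and> (\<forall>i j. tdist (f i) (f j) = nat \<bar>i - j\<bar>)}"

definition tree_aut :: "(nat list \<Rightarrow> nat list) \<Rightarrow> bool" where
  "tree_aut \<phi> \<longleftrightarrow> bij_betw \<phi> tverts tverts \<and>
     (\<forall>x\<in>tverts. \<forall>y\<in>tverts. tadj (\<phi> x) (\<phi> y) \<longleftrightarrow> tadj x y)"

definition line_cyl :: "nat list \<Rightarrow> nat list \<Rightarrow> nat list set set" where
  "line_cyl x y = {l \<in> tlines. x \<in> l \<and> y \<in> l}"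

definition line_sets :: "nat list set set set" where
  "line_sets = sigma_sets tlines {line_cyl x y | x y. x \<in> tverts \<and> y \<in> tverts}"

definition is_line_measure :: "nat list set measure \<Rightarrow> bool" where
  "is_line_measure \<mu> \<longleftrightarrow> space \<mu> = tlines \<and> sets \<mu> = line_sets \<and>
     (\<forall>x\<in>tverts. \<forall>y\<in>tverts. x \<noteq> y \<longrightarrow>
        emeasure \<mu> (line_cyl x y) = ennreal ((1/2) ^ tdist x y)) \<and>
     (\<forall>\<phi>. tree_aut \<phi> \<longrightarrow> (\<forall>A\<in>sets \<mu>. emeasure \<mu> ((\<lambda>l. \<phi> ` l) ` A) = emeasure \<mu> A))"

definition road_intensity :: "real \<Rightarrow> nat list set measure \<Rightarrow> (nat list set \<times> real) measure" where
  "road_intensity \<beta> \<mu> = \<mu> \<Otimes>\<^sub>M density (restrict_space lborel {0<..}) (\<lambda>v. ennreal ((\<beta> - 1) * v powr (- \<beta>)))"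

definition pcount :: "'a set \<Rightarrow> 'a set \<Rightarrow> enat" where
  "pcount S A = (if finite (S \<inter> A) then enat (card (S \<inter> A)) else \<infinity>)"

definition poisson_process :: "'w measure \<Rightarrow> 'a measure \<Rightarrow> ('w \<Rightarrow> 'a set) \<Rightarrow> bool" where
  "poisson_process M \<Lambda> Roads \<longleftrightarrow> prob_space M \<and>
     (\<forall>\<omega>\<in>space M. Roads \<omega> \<subseteq> space \<Lambda>) \<and>
     (\<forall>A\<in>sets \<Lambda>. (\<lambda>\<omega>. pcount (Roads \<omega>) A) \<in> measurable M (count_space UNIV)) \<and>
     (\<forall>A\<in>sets \<Lambda>. emeasure \<Lambda> A < \<infinity> \<longrightarrow> (\<forall>k::nat.
         measure M {\<omega>\<in>space M. pcount (Roads \<omega>) A = enat k}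
           = enn2real (emeasure \<Lambda> A) ^ k / fact k * exp (- enn2real (emeasure \<Lambda> A)))) \<and>
     (\<forall>A\<in>sets \<Lambda>. emeasure \<Lambda> A = \<infinity> \<longrightarrow>
         measure M {\<omega>\<in>space M. pcount (Roads \<omega>) A = \<infinity>} = 1) \<and>
     (\<forall>I (A :: nat \<Rightarrow> 'a set). finite I \<longrightarrow> A ` I \<subseteq> sets \<Lambda> \<longrightarrow> disjoint_family_on A I \<longrightarrow>
         prob_space.indep_vars M (\<lambda>_. count_space UNIV) (\<lambda>i \<omega>. pcount (Roads \<omega>) (A i)) I)"

definition Vspeed :: "(nat list set \<times> real) set \<Rightarrow> nat list set set \<Rightarrow> ereal" where
  "Vspeed R F = Sup (insert 0 {ereal v | v l. (l, v) \<in> R \<and> (\<forall>e\<in>F. e \<subseteq> l)})"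

definition ones :: "nat \<Rightarrow> nat list" where
  "ones k = replicate k 1"

definition pedge :: "nat \<Rightarrow> nat list set" where
  "pedge k = {ones (k - 1), ones k}"

definition connected_in :: "nat list set set \<Rightarrow> nat list set set \<Rightarrow> bool" where
  "connected_in F E \<longleftrightarrow> (\<forall>i j k. pedge i \<in> F \<and> pedge j \<in> F \<and> i \<le> j \<and> i \<le> k \<and> k \<le> j
      \<and> pedge k \<in> E \<longrightarrow> pedge k \<in> F)"

definition a_prob :: "'w measure \<Rightarrow> ('w \<Rightarrow> (nat list set \<times> real) set) \<Rightarrow> real
    \<Rightarrow> nat list set set \<Rightarrow> real" where
  "a_prob M Roads t E = measure M {\<omega>\<in>space M. (\<Sum>e\<in>E. inverse (Vspeed (Roads \<omega>) {e})) \<le> ereal t}"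

end

theory Submission
  imports Defs
begin

text \<open>On the event \<open>\<Sum>e\<in>E. 1 / V e \<le> t\<close> some edge has \<open>V e \<ge> #E / t\<close>, so for every
  \<open>r < #E / t\<close> a road faster than \<open>r\<close> passes through it. The edges of \<open>E\<close> on the line of that road
  form a non-empty set \<open>F\<close> which is connected in \<open>E\<close>, because a geodesic through \<open>1\<^sub>a\<close> and \<open>1\<^sub>b\<close>
  passes through every \<open>1\<^sub>c\<close> in between; and \<open>\<Sum>e\<in>E - F. 1 / V e \<le> t\<close> still holds. The first event
  only depends on the roads whose line meets \<open>E\<close> exactly in \<open>F\<close>, the second only on the other
  roads, so the two are independent by the Poisson property. A union bound over \<open>F\<close> gives the
  inequality with \<open>P(V\<^sub>F > r)\<close>, and letting \<open>r\<close> increase to \<open>#E / t\<close> gives \<open>P(V\<^sub>F \<ge> #E / t)\<close>.\<close>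

section \<open>Geodesics along the spine of the tree\<close>

lemma tverts_butlast: "xs @ [a] \<in> tverts \<Longrightarrow> xs \<in> tverts"
  unfolding tverts_def by (cases xs) auto

lemma ones_in_tverts: "ones k \<in> tverts"
  unfolding tverts_def ones_def by (cases k) auto

lemma twalk_snoc: "twalk p x y n \<Longrightarrow> tadj y z \<Longrightarrow> twalk (p @ [z]) x z (Suc n)"
  unfolding twalk_def by (auto simp: nth_append less_Suc_eq)

lemma twalk_Cons:
  assumes walk: "twalk p x y n" and adj: "tadj x' x"
  shows "twalk (x' # p) x' y (Suc n)"
proof -
  have "tadj ((x' # p) ! i) ((x' # p) ! Suc i)" if "i < Suc n" for i
    using that walk adj unfolding twalk_def by (cases i) auto
  then show ?thesis using walk adj unfolding twalk_def tadj_def by auto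
qed

lemma twalk_from_root: "y \<in> tverts \<Longrightarrow> \<exists>n p. twalk p [] y n"
proof (induction y rule: rev_induct)
  case Nil
  have "twalk [[]] [] [] 0" by (simp add: twalk_def tverts_def)
  then show ?case by blast
next
  case (snoc a ys)
  then have "ys \<in> tverts" using tverts_butlast by blast
  with snoc show ?case by (meson tadj_def twalk_snoc)
qed

lemma twalk_exists: "x \<in> tverts \<Longrightarrow> y \<in> tverts \<Longrightarrow> \<exists>n p. twalk p x y n"
proof (induction x rule: rev_induct)
  case Nil
  then show ?case using twalk_from_root by blast
next
  case (snoc a xs)
  then have "xs \<in> tverts" using tverts_butlast by blast
  with snoc show ?case by (meson tadj_def twalk_Cons)
qed

lemma tdist_eq_1_imp_tadj:
  assumes "x \<in> tverts" "y \<in> tverts" "tdist x y = 1"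
  shows "tadj x y"
proof -
  have "\<exists>p. twalk p x y (tdist x y)"
    unfolding tdist_def using twalk_exists[OF assms(1,2)] by (rule LeastI_ex)
  then show ?thesis using assms(3) unfolding twalk_def by auto
qed

lemma exists_crossing_step: "\<not> Q (g 0) \<Longrightarrow> Q (g N) \<Longrightarrow> \<exists>m<N. \<not> Q (g m) \<and> Q (g (Suc m))"
proof (induction N)
  case (Suc N)
  then show ?case by (cases "Q (g N)") (auto intro: less_SucI)
qed simp

lemma tadj_into_subtree:
  assumes "tadj u w" "\<nexists>z. u = v @ z" "\<exists>z. w = v @ z"
  shows "w = v"
proof -
  obtain x where "w = u @ [x] \<or> u = w @ [x]" using assms(1) unfolding tadj_def by auto
  then show ?thesis
  proof
    assume w: "w = u @ [x]"
    obtain z where z: "w = v @ z" using assms(3) by auto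
    show ?thesis
    proof (cases z rule: rev_cases)
      case (snoc z' y)
      then have "u = v @ z'" using w z by simp
      then show ?thesis using assms(2) by blast
    qed (use z in simp)
  next
    assume "u = w @ [x]"
    then show ?thesis using assms(2,3) by auto
  qed
qed

lemma walk_passes_through_ones:
  assumes adj: "\<And>m. m < N \<Longrightarrow> tadj (g m) (g (Suc m))"
    and start: "g 0 = ones a" and stop: "g N = ones b" and "a < c" "c \<le> b"
  shows "\<exists>m. g m = ones c"
proof -
  define below where "below v \<longleftrightarrow> (\<exists>z. v = ones c @ z)" for v
  have "below (ones b)"
    unfolding below_def ones_def using \<open>c \<le> b\<close> by (metis le_add_diff_inverse replicate_add)
  moreover have "\<not> below (ones a)"
    unfolding below_def ones_def using \<open>a < c\<close> by (metis length_append length_replicate not_add_less1)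
  ultimately obtain m where m: "m < N" "\<not> below (g m)" "below (g (Suc m))"
    using exists_crossing_step[of below g N] start stop by auto
  then have "g (Suc m) = ones c"
    using tadj_into_subtree[OF adj[OF m(1)]] unfolding below_def by blast
  then show ?thesis by blast
qed

lemma line_contains_ones_between:
  assumes l: "l \<in> tlines" and a: "ones a \<in> l" and b: "ones b \<in> l" and "a \<le> c" "c \<le> b"
  shows "ones c \<in> l"
proof (cases "a = c")
  case False
  obtain f where l_eq: "l = range f" and f_tverts: "\<forall>i. f i \<in> tverts"
    and f_geodesic: "\<forall>i j. tdist (f i) (f j) = nat \<bar>i - j\<bar>"
    using l unfolding tlines_def by blast
  obtain p q where p: "f p = ones a" and q: "f q = ones b" using a b l_eq by auto
  define d :: int where "d = (if p \<le> q then 1 else -1)"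
  define g where "g m = f (p + d * int m)" for m
  have adj: "tadj (g m) (g (Suc m))" for m
    using f_tverts f_geodesic by (intro tdist_eq_1_imp_tadj) (auto simp: g_def d_def algebra_simps)
  have "g 0 = ones a" "g (nat \<bar>q - p\<bar>) = ones b"
    using p q by (auto simp: g_def d_def)
  moreover have "a < c"
    using False \<open>a \<le> c\<close> by simp
  ultimately obtain m where "g m = ones c"
    using walk_passes_through_ones[of "nat \<bar>q - p\<bar>" g a b c] adj \<open>c \<le> b\<close> by blast
  then show ?thesis unfolding g_def l_eq by (metis rangeI)
qed (use a in simp)

lemma connected_in_line_trace:
  assumes l: "l \<in> tlines"
  shows "connected_in {e\<in>E. e \<subseteq> l} E"
  unfolding connected_in_def
proof (intro allI impI, elim conjE)
  fix i j k
  assume i: "pedge i \<in> {e\<in>E. e \<subseteq> l}" and j: "pedge j \<in> {e\<in>E. e \<subseteq> l}"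
    and "i \<le> k" "k \<le> j" and k: "pedge k \<in> E"
  have "ones (i - 1) \<in> l" "ones j \<in> l" using i j by (auto simp: pedge_def)
  moreover have "i - 1 \<le> k - 1" "k - 1 \<le> j" "i - 1 \<le> k"
    using \<open>i \<le> k\<close> \<open>k \<le> j\<close> by auto
  ultimately have "ones (k - 1) \<in> l" "ones k \<in> l"
    using line_contains_ones_between[OF l] \<open>k \<le> j\<close> by blast+
  then show "pedge k \<in> {e\<in>E. e \<subseteq> l}" using k by (auto simp: pedge_def)
qed

section \<open>Void events of a Poisson process\<close>

definition void_event :: "'w measure \<Rightarrow> ('w \<Rightarrow> 'a set) \<Rightarrow> 'a set \<Rightarrow> 'w set" where
  "void_event M Roads A = {\<omega>\<in>space M. Roads \<omega> \<inter> A = {}}"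

definition void_events :: "'w measure \<Rightarrow> ('w \<Rightarrow> 'a set) \<Rightarrow> 'a set set \<Rightarrow> 'w set set" where
  "void_events M Roads \<A> = void_event M Roads ` \<A>"

lemma void_event_Int: "void_event M Roads A \<inter> void_event M Roads B = void_event M Roads (A \<union> B)"
  by (auto simp: void_event_def)

lemma void_event_eq_pcount: "void_event M Roads A = {\<omega>\<in>space M. pcount (Roads \<omega>) A = 0}"
  by (auto simp: void_event_def pcount_def zero_enat_def)

context
  fixes M :: "'w measure" and L :: "'a measure" and Roads
  assumes pp: "poisson_process M L Roads"
begin

lemma poisson_prob_space: "prob_space M"
  using pp unfolding poisson_process_def by (elim conjE)

lemma poisson_in_space: "\<omega> \<in> space M \<Longrightarrow> Roads \<omega> \<subseteq> space L"
  using pp unfolding poisson_process_def by (elim conjE) (erule bspec)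

lemma poisson_indep_counts:
  assumes "finite I" "A ` I \<subseteq> sets L" "disjoint_family_on A I"
  shows "prob_space.indep_vars M (\<lambda>_. count_space UNIV) (\<lambda>i \<omega>. pcount (Roads \<omega>) (A i)) (I :: nat set)"
  using pp unfolding poisson_process_def by (elim conjE) (simp add: assms)

lemma void_event_sets:
  assumes "A \<in> sets L"
  shows "void_event M Roads A \<in> sets M"
proof -
  have "(\<lambda>\<omega>. pcount (Roads \<omega>) A) \<in> measurable M (count_space UNIV)"
    using pp assms unfolding poisson_process_def by (elim conjE) (erule bspec)
  from measurable_sets[OF this, of "{0}"] show ?thesis
    unfolding void_event_eq_pcount by (simp add: vimage_def Int_def conj_commute)
qed

lemma void_events_sets: "void_events M Roads {A \<in> sets L. P A} \<subseteq> sets M"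
  using void_event_sets by (auto simp: void_events_def)

lemma indep_void_events_disjoint:
  assumes A: "A \<in> sets L" and B: "B \<in> sets L" and disj: "A \<inter> B = {}"
  shows "measure M (void_event M Roads A \<inter> void_event M Roads B)
    = measure M (void_event M Roads A) * measure M (void_event M Roads B)"
proof -
  interpret prob_space M by (rule poisson_prob_space)
  define A' where "A' i = (if i = 0 then A else B)" for i :: nat
  have disj': "disjoint_family_on A' {0,1}"
    using disj unfolding disjoint_family_on_def A'_def by auto
  have "indep_vars (\<lambda>_. count_space UNIV) (\<lambda>i \<omega>. pcount (Roads \<omega>) (A' i)) {0,1}"
    using A B by (intro poisson_indep_counts[OF _ _ disj']) (auto simp: A'_def)
  then have indep: "indep_sets (\<lambda>i. {(\<lambda>\<omega>. pcount (Roads \<omega>) (A' i)) -` C \<inter> space M | C. True}) {0,1}"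
    unfolding indep_vars_def2 by simp
  have "void_event M Roads (A' i) = (\<lambda>\<omega>. pcount (Roads \<omega>) (A' i)) -` {0} \<inter> space M" for i
    unfolding void_event_eq_pcount by auto
  then have "prob (\<Inter>i\<in>{0,1}. void_event M Roads (A' i)) = (\<Prod>i\<in>{0,1}. prob (void_event M Roads (A' i)))"
    by (intro indep_setsD[OF indep]) auto
  then show ?thesis by (simp add: A'_def)
qed

text \<open>Void events are closed under intersection, so independence of the generators lifts to the
  generated \<open>\<sigma>\<close>-algebras.\<close>
lemma indep_inside_outside:
  "prob_space.indep_set M
     (sigma_sets (space M) (void_events M Roads {A \<in> sets L. A \<subseteq> R}))
     (sigma_sets (space M) (void_events M Roads {A \<in> sets L. A \<inter> R = {}}))"
proof -
  interpret prob_space M by (rule poisson_prob_space)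
  have Int_stable: "Int_stable (void_events M Roads {A \<in> sets L. P A})"
    if "\<And>A B. P A \<Longrightarrow> P B \<Longrightarrow> P (A \<union> B)" for P
    using that unfolding Int_stable_def void_events_def by (auto simp: void_event_Int)
  show ?thesis
  proof (rule indep_set_sigma_sets[OF indep_setI Int_stable Int_stable])
    fix a b
    assume "a \<in> void_events M Roads {A \<in> sets L. A \<subseteq> R}" "b \<in> void_events M Roads {A \<in> sets L. A \<inter> R = {}}"
    then show "prob (a \<inter> b) = prob a * prob b"
      unfolding void_events_def by (auto intro!: indep_void_events_disjoint)
  qed (use void_events_sets in auto)
qed

end

lemma Vspeed_nonneg: "0 \<le> Vspeed R F"
  unfolding Vspeed_def by (simp add: Sup_upper)

lemma ereal_less_Vspeed_iff:
  assumes "0 \<le> r"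
  shows "ereal r < Vspeed R F \<longleftrightarrow> (\<exists>l v. (l, v) \<in> R \<and> (\<forall>e\<in>F. e \<subseteq> l) \<and> r < v)"
proof
  assume "ereal r < Vspeed R F"
  then obtain x where "x \<in> insert 0 {ereal v | v l. (l, v) \<in> R \<and> (\<forall>e\<in>F. e \<subseteq> l)}" "ereal r < x"
    unfolding Vspeed_def less_Sup_iff by blast
  then show "\<exists>l v. (l, v) \<in> R \<and> (\<forall>e\<in>F. e \<subseteq> l) \<and> r < v"
    using assms by (auto; blast)
next
  assume "\<exists>l v. (l, v) \<in> R \<and> (\<forall>e\<in>F. e \<subseteq> l) \<and> r < v"
  then show "ereal r < Vspeed R F"
    unfolding Vspeed_def less_Sup_iff by fastforce
qed

lemma exists_ge_card_div_of_sum_inverse_le: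
  fixes V :: "'a \<Rightarrow> ereal"
  assumes "finite E" "E \<noteq> {}" "t > 0" "\<And>e. e \<in> E \<Longrightarrow> 0 \<le> V e"
    and sum_le: "(\<Sum>e\<in>E. inverse (V e)) \<le> ereal t"
  shows "\<exists>e\<in>E. ereal (real (card E) / t) \<le> V e"
proof -
  have "Max (V ` E) \<in> V ` E"
    using assms(1,2) by simp
  then obtain e where e: "e \<in> E" "V e = Max (V ` E)"
    by (metis imageE)
  then have max: "V e' \<le> V e" if "e' \<in> E" for e'
    using Max_ge assms(1) that by simp
  have "(\<Sum>e'\<in>E. inverse (V e)) \<le> (\<Sum>e'\<in>E. inverse (V e'))"
    by (intro sum_mono ereal_inverse_antimono max assms(4))
  then have const_le: "(\<Sum>e'\<in>E. inverse (V e)) \<le> ereal t"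
    using sum_le by (rule order.trans)
  have card_pos: "real (card E) > 0"
    using assms(1,2) by (simp add: card_gt_0_iff)
  show ?thesis
  proof (cases "inverse (V e)")
    case (real y)
    have "ereal (real (card E) / t) \<le> V e"
    proof (cases "V e")
      case (real v)
      then have "v > 0" "v * y = 1"
        using \<open>inverse (V e) = ereal y\<close> assms(4)[OF e(1)] by (auto split: if_splits)
      moreover have "y * real (card E) \<le> t"
        using const_le \<open>inverse (V e) = ereal y\<close> by (simp add: mult.commute)
      ultimately have "real (card E) \<le> v * t"
        using mult_left_mono[of "y * real (card E)" t v] by (simp add: mult.assoc[symmetric])
      then show ?thesis
        using real assms(3) by (simp add: field_simps)
    qed (use assms(4)[OF e(1)] in simp_all)
    then show ?thesis using e(1) by blast
  next
    case PInf
    then show ?thesis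
      using const_le assms(1,2) sum_Pinfty[of "\<lambda>_. inverse (V e)" E] by auto
  qed simp
qed

lemma ereal_ge_iff_less_approx:
  assumes "0 < s"
  shows "ereal s \<le> x \<longleftrightarrow> (\<forall>n::nat. ereal (s - s / (real n + 2)) < x)"
proof
  assume "ereal s \<le> x"
  then show "\<forall>n. ereal (s - s / (real n + 2)) < x"
    using assms by (auto intro: less_le_trans[of _ "ereal s"])
next
  assume below: "\<forall>n. ereal (s - s / (real n + 2)) < x"
  show "ereal s \<le> x"
  proof (rule ereal_le_epsilon2)
    fix e :: real assume "0 < e"
    obtain n where "s / e < real n" using reals_Archimedean2 by blast
    then have "s / (real n + 2) < e"
      using \<open>0 < e\<close> assms by (simp add: field_simps)
    then have "ereal s \<le> ereal (s - s / (real n + 2)) + ereal e"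
      by simp
    also have "\<dots> \<le> x + ereal e"
      using below by (intro add_right_mono less_imp_le) blast
    finally show "ereal s \<le> x + ereal e" .
  qed
qed

lemma (in prob_space) prob_ge_eq_lim_prob_greater:
  fixes X :: "'a \<Rightarrow> ereal"
  assumes "0 < s" and events: "\<And>r. 0 \<le> r \<Longrightarrow> {x\<in>space M. ereal r < X x} \<in> events"
  shows "(\<lambda>n. prob {x\<in>space M. ereal (s - s / (real n + 2)) < X x}) \<longlonglongrightarrow> prob {x\<in>space M. ereal s \<le> X x}"
proof -
  define r where "r n = s - s / (real n + 2)" for n :: nat
  have r_nonneg: "0 \<le> r n" for n
    using assms(1) by (simp add: r_def field_simps)
  have "mono r"
    using assms(1) by (intro monoI) (simp add: r_def frac_le)
  then have "decseq (\<lambda>n. {x\<in>space M. ereal (r n) < X x})"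
    unfolding decseq_def
    using le_less_trans[OF ereal_less_eq(3)[THEN iffD2, OF monoD[OF \<open>mono r\<close>]]] by blast
  then have "(\<lambda>n. prob {x\<in>space M. ereal (r n) < X x}) \<longlonglongrightarrow> prob (\<Inter>n. {x\<in>space M. ereal (r n) < X x})"
    using events r_nonneg by (intro finite_Lim_measure_decseq) auto
  moreover have "(\<Inter>n. {x\<in>space M. ereal (r n) < X x}) = {x\<in>space M. ereal s \<le> X x}"
    using ereal_ge_iff_less_approx[OF assms(1)] by (auto simp: r_def)
  ultimately show ?thesis
    by (simp add: r_def)
qed

text \<open>For \<open>E = F\<close> these are simply the roads faster than \<open>r\<close> whose line contains every edge of \<open>F\<close>.\<close>
definition trace_roads :: "('a set \<times> real) measure \<Rightarrow> 'a set set \<Rightarrow> 'a set set \<Rightarrow> real \<Rightarrow> ('a set \<times> real) set" where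
  "trace_roads L E F r = {(l, v) \<in> space L. (\<forall>e\<in>E. e \<subseteq> l \<longleftrightarrow> e \<in> F) \<and> r < v}"

lemma Vspeed_greater_event_eq:
  assumes "poisson_process M L Roads" "0 \<le> r"
  shows "{\<omega>\<in>space M. ereal r < Vspeed (Roads \<omega>) F} = space M - void_event M Roads (trace_roads L F F r)"
proof -
  have "ereal r < Vspeed (Roads \<omega>) F \<longleftrightarrow> Roads \<omega> \<inter> trace_roads L F F r \<noteq> {}" if "\<omega> \<in> space M" for \<omega>
    using poisson_in_space[OF assms(1) that]
    unfolding ereal_less_Vspeed_iff[OF assms(2)] trace_roads_def by blast
  then show ?thesis
    by (auto simp: void_event_def)
qed

locale road_model =
  fixes \<beta> :: real and \<mu> :: "nat list set measure" and M :: "'w measure"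
    and Roads :: "'w \<Rightarrow> (nat list set \<times> real) set"
  assumes line_measure: "is_line_measure \<mu>"
    and poisson: "poisson_process M (road_intensity \<beta> \<mu>) Roads"
begin

abbreviation "L \<equiv> road_intensity \<beta> \<mu>"

sublocale prob_space M
  by (rule poisson_prob_space[OF poisson])

lemma space_line_measure: "space \<mu> = tlines"
  using line_measure unfolding is_line_measure_def by (elim conjE)

lemma sets_line_measure: "sets \<mu> = line_sets"
  using line_measure unfolding is_line_measure_def by (elim conjE)

lemma space_road_intensity: "space L = tlines \<times> {0<..}"
  by (simp add: space_line_measure road_intensity_def space_pair_measure)

lemma line_trace_sets:
  assumes "finite E" "E \<subseteq> range pedge"
  shows "{l \<in> tlines. \<forall>e\<in>E. e \<subseteq> l \<longleftrightarrow> e \<in> F} \<in> sets \<mu>"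
proof -
  have cyl: "{l \<in> space \<mu>. pedge k \<subseteq> l} \<in> sets \<mu>" for k
  proof -
    have "{l \<in> space \<mu>. pedge k \<subseteq> l} = line_cyl (ones (k - 1)) (ones k)"
      by (auto simp: space_line_measure line_cyl_def pedge_def)
    also have "\<dots> \<in> sets \<mu>"
      unfolding sets_line_measure line_sets_def using ones_in_tverts by (blast intro: sigma_sets.Basic)
    finally show ?thesis .
  qed
  have "{l \<in> space \<mu>. \<forall>e\<in>E. e \<subseteq> l \<longleftrightarrow> e \<in> F} \<in> sets \<mu>"
  proof (rule sets.sets_Collect_finite_All[OF _ assms(1)])
    fix e assume "e \<in> E"
    then obtain k where k: "e = pedge k" using assms(2) by blast
    show "{l \<in> space \<mu>. e \<subseteq> l \<longleftrightarrow> e \<in> F} \<in> sets \<mu>"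
    proof (cases "e \<in> F")
      case False
      then have "{l \<in> space \<mu>. e \<subseteq> l \<longleftrightarrow> e \<in> F} = space \<mu> - {l \<in> space \<mu>. pedge k \<subseteq> l}"
        using k by auto
      then show ?thesis using cyl by auto
    qed (use cyl k in simp)
  qed
  then show ?thesis
    by (simp add: space_line_measure)
qed

lemma trace_roads_sets:
  assumes "finite E" "E \<subseteq> range pedge"
  shows "trace_roads L E F r \<in> sets L"
proof -
  have "trace_roads L E F r = {l \<in> tlines. \<forall>e\<in>E. e \<subseteq> l \<longleftrightarrow> e \<in> F} \<times> ({0<..} \<inter> {r<..})"
    by (auto simp: trace_roads_def space_road_intensity)
  moreover have "{0<..} \<inter> {r<..} \<in> sets (restrict_space lborel ({0<..} :: real set))"
    by (subst sets_restrict_space_iff) auto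
  ultimately show ?thesis
    unfolding road_intensity_def using line_trace_sets[OF assms] by (simp add: pair_measureI)
qed

lemma Vspeed_greater_sets:
  assumes "finite F" "F \<subseteq> range pedge" "0 \<le> r"
  shows "{\<omega>\<in>space M. ereal r < Vspeed (Roads \<omega>) F} \<in> events"
  unfolding Vspeed_greater_event_eq[OF poisson assms(3)]
  using void_event_sets[OF poisson trace_roads_sets[OF assms(1,2)]] by blast

abbreviation outside_events :: "(nat list set \<times> real) set \<Rightarrow> 'w set set" where
  "outside_events R \<equiv> sigma_sets (space M) (void_events M Roads {A \<in> sets L. A \<inter> R = {}})"

lemma Vspeed_measurable_outside:
  assumes "finite F" "F \<subseteq> range pedge" and disj: "\<And>r. 0 \<le> r \<Longrightarrow> trace_roads L F F r \<inter> R = {}"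
  shows "(\<lambda>\<omega>. Vspeed (Roads \<omega>) F) \<in> borel_measurable (sigma (space M) (void_events M Roads {A \<in> sets L. A \<inter> R = {}}))"
    (is "_ \<in> borel_measurable ?N")
proof (rule borel_measurableI_greater)
  have gens: "void_events M Roads {A \<in> sets L. A \<inter> R = {}} \<subseteq> Pow (space M)"
    by (auto simp: void_events_def void_event_def)
  fix y :: ereal
  consider "y < 0" | "y = \<infinity>" | r where "y = ereal r" "0 \<le> r"
    by (cases y) force+
  then show "{\<omega> \<in> space ?N. y < Vspeed (Roads \<omega>) F} \<in> sets ?N"
  proof cases
    case 1
    then have "{\<omega> \<in> space ?N. y < Vspeed (Roads \<omega>) F} = space ?N"
      using Vspeed_nonneg less_le_trans by blast
    then show ?thesis by simp
  next
    case 3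
    have "void_event M Roads (trace_roads L F F r) \<in> void_events M Roads {A \<in> sets L. A \<inter> R = {}}"
      unfolding void_events_def using trace_roads_sets[OF assms(1,2)] disj[OF 3(2)] by blast
    then have "space M - void_event M Roads (trace_roads L F F r) \<in> outside_events R"
      by (intro sigma_sets.Compl sigma_sets.Basic)
    then show ?thesis
      using gens 3 Vspeed_greater_event_eq[OF poisson 3(2)] by simp
  qed simp
qed

lemma sum_inverse_Vspeed_event_outside:
  assumes "finite E" "E \<subseteq> range pedge"
  shows "{\<omega>\<in>space M. (\<Sum>e\<in>E - F. inverse (Vspeed (Roads \<omega>) {e})) \<le> ereal t}
    \<in> outside_events (trace_roads L E F 0)"
proof -
  let ?N = "sigma (space M) (void_events M Roads {A \<in> sets L. A \<inter> trace_roads L E F 0 = {}})"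
  have gens: "void_events M Roads {A \<in> sets L. A \<inter> trace_roads L E F 0 = {}} \<subseteq> Pow (space M)"
    by (auto simp: void_events_def void_event_def)
  have "(\<lambda>\<omega>. Vspeed (Roads \<omega>) {e}) \<in> borel_measurable ?N" if "e \<in> E - F" for e
    using that assms by (intro Vspeed_measurable_outside) (auto simp: trace_roads_def)
  then have "(\<lambda>\<omega>. \<Sum>e\<in>E - F. inverse (Vspeed (Roads \<omega>) {e})) \<in> borel_measurable ?N"
    by (intro borel_measurable_ereal_sum borel_measurable_ereal_inverse)
  then have "{\<omega>\<in>space ?N. (\<Sum>e\<in>E - F. inverse (Vspeed (Roads \<omega>) {e})) \<le> ereal t} \<in> sets ?N"
    by measurable
  then show ?thesis
    using gens by simp
qed

lemma indep_trace_roads_rest: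
  assumes "finite E" "E \<subseteq> range pedge" "0 \<le> r"
  shows "prob ((space M - void_event M Roads (trace_roads L E F r))
      \<inter> {\<omega>\<in>space M. (\<Sum>e\<in>E - F. inverse (Vspeed (Roads \<omega>) {e})) \<le> ereal t})
    = prob (space M - void_event M Roads (trace_roads L E F r)) * a_prob M Roads t (E - F)"
proof -
  have "trace_roads L E F r \<subseteq> trace_roads L E F 0"
    using assms(3) by (auto simp: trace_roads_def)
  then have "void_event M Roads (trace_roads L E F r)
      \<in> void_events M Roads {A \<in> sets L. A \<subseteq> trace_roads L E F 0}"
    unfolding void_events_def using trace_roads_sets[OF assms(1,2)] by blast
  then have "space M - void_event M Roads (trace_roads L E F r)
      \<in> sigma_sets (space M) (void_events M Roads {A \<in> sets L. A \<subseteq> trace_roads L E F 0})"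
    by (intro sigma_sets.Compl sigma_sets.Basic)
  from indep_setD[OF indep_inside_outside[OF poisson] this sum_inverse_Vspeed_event_outside[OF assms(1,2)]]
  show ?thesis
    by (simp add: a_prob_def)
qed

lemma exists_connected_trace_of_fast_road:
  assumes "finite E" "E \<noteq> {}" "t > 0" "\<omega> \<in> space M" "0 \<le> r" "r < real (card E) / t"
    and sum_le: "(\<Sum>e\<in>E. inverse (Vspeed (Roads \<omega>) {e})) \<le> ereal t"
  shows "\<exists>F. F \<subseteq> E \<and> F \<noteq> {} \<and> connected_in F E \<and> \<omega> \<notin> void_event M Roads (trace_roads L E F r)
    \<and> (\<Sum>e\<in>E - F. inverse (Vspeed (Roads \<omega>) {e})) \<le> ereal t"
proof -
  obtain e where e: "e \<in> E" "ereal (real (card E) / t) \<le> Vspeed (Roads \<omega>) {e}"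
    using exists_ge_card_div_of_sum_inverse_le[OF assms(1-3) Vspeed_nonneg sum_le] by blast
  have "ereal r < Vspeed (Roads \<omega>) {e}"
    using less_le_trans[of "ereal r" "ereal (real (card E) / t)"] assms(6) e(2) by simp
  then obtain l v where road: "(l, v) \<in> Roads \<omega>" "e \<subseteq> l" "r < v"
    unfolding ereal_less_Vspeed_iff[OF assms(5)] by blast
  then have "(l, v) \<in> space L"
    using poisson_in_space[OF poisson assms(4)] by blast
  then have "l \<in> tlines"
    by (simp add: space_road_intensity)
  define F where "F = {e'\<in>E. e' \<subseteq> l}"
  have "(l, v) \<in> trace_roads L E F r"
    using \<open>(l, v) \<in> space L\<close> road by (auto simp: trace_roads_def F_def)
  then have "\<omega> \<notin> void_event M Roads (trace_roads L E F r)"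
    using road(1) by (auto simp: void_event_def)
  moreover have "F \<subseteq> E" "F \<noteq> {}" "connected_in F E"
    using e road \<open>l \<in> tlines\<close> connected_in_line_trace by (auto simp: F_def)
  moreover have "(\<Sum>e\<in>E - F. inverse (Vspeed (Roads \<omega>) {e})) \<le> (\<Sum>e\<in>E. inverse (Vspeed (Roads \<omega>) {e}))"
    using assms(1) by (intro sum_mono2) (auto intro: inverse_ereal_ge0I Vspeed_nonneg)
  ultimately show ?thesis
    using sum_le order.trans by blast
qed

lemma a_prob_le_sum_slower:
  assumes "finite E" "E \<subseteq> range pedge" "E \<noteq> {}" "t > 0" "0 \<le> r" "r < real (card E) / t"
  shows "a_prob M Roads t E \<le> (\<Sum>F\<in>{F. F \<subseteq> E \<and> F \<noteq> {} \<and> connected_in F E}.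
      prob {\<omega>\<in>space M. ereal r < Vspeed (Roads \<omega>) F} * a_prob M Roads t (E - F))"
proof -
  let ?parts = "{F. F \<subseteq> E \<and> F \<noteq> {} \<and> connected_in F E}"
  define fast where "fast F = space M - void_event M Roads (trace_roads L E F r)" for F
  define rest where "rest F = {\<omega>\<in>space M. (\<Sum>e\<in>E - F. inverse (Vspeed (Roads \<omega>) {e})) \<le> ereal t}" for F
  have finite_parts: "finite ?parts"
    by (rule finite_subset[of _ "Pow E"]) (use assms(1) in auto)
  have fast_sets: "fast F \<in> events" for F
    unfolding fast_def by (intro sets.compl_sets void_event_sets[OF poisson] trace_roads_sets assms(1,2))
  have "outside_events R \<subseteq> events" for R
    by (rule sets.sigma_sets_subset[OF void_events_sets[OF poisson]])
  then have rest_sets: "rest F \<in> events" for F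
    unfolding rest_def using sum_inverse_Vspeed_event_outside[OF assms(1,2)] by (rule subsetD)
  have fast_le: "fast F \<subseteq> {\<omega>\<in>space M. ereal r < Vspeed (Roads \<omega>) F}" if "F \<subseteq> E" for F
  proof -
    have "trace_roads L E F r \<subseteq> trace_roads L F F r"
      using that by (auto simp: trace_roads_def)
    then have "space M - void_event M Roads (trace_roads L E F r)
        \<subseteq> space M - void_event M Roads (trace_roads L F F r)"
      unfolding void_event_def by blast
    then show ?thesis
      unfolding fast_def Vspeed_greater_event_eq[OF poisson assms(5)] .
  qed
  have "{\<omega>\<in>space M. (\<Sum>e\<in>E. inverse (Vspeed (Roads \<omega>) {e})) \<le> ereal t} \<subseteq> (\<Union>F\<in>?parts. fast F \<inter> rest F)"
  proof safe
    fix \<omega> assume \<omega>: "\<omega> \<in> space M" and sum_le: "(\<Sum>e\<in>E. inverse (Vspeed (Roads \<omega>) {e})) \<le> ereal t"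
    from exists_connected_trace_of_fast_road[OF assms(1,3,4) \<omega> assms(5,6) sum_le]
    show "\<omega> \<in> (\<Union>F\<in>?parts. fast F \<inter> rest F)"
      using \<omega> unfolding fast_def rest_def by blast
  qed
  then have "a_prob M Roads t E \<le> prob (\<Union>F\<in>?parts. fast F \<inter> rest F)"
    unfolding a_prob_def using finite_parts fast_sets rest_sets by (intro finite_measure_mono) auto
  also have "\<dots> \<le> (\<Sum>F\<in>?parts. prob (fast F \<inter> rest F))"
    using finite_parts fast_sets rest_sets by (intro finite_measure_subadditive_finite) auto
  also have "\<dots> = (\<Sum>F\<in>?parts. prob (fast F) * a_prob M Roads t (E - F))"
    unfolding fast_def rest_def using indep_trace_roads_rest[OF assms(1,2,5)] by simp
  also have "\<dots> \<le> (\<Sum>F\<in>?parts. prob {\<omega>\<in>space M. ereal r < Vspeed (Roads \<omega>) F} * a_prob M Roads t (E - F))"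
  proof (intro sum_mono mult_right_mono)
    fix F assume "F \<in> ?parts"
    then show "prob (fast F) \<le> prob {\<omega>\<in>space M. ereal r < Vspeed (Roads \<omega>) F}"
      using fast_le assms(1,2,5) by (intro finite_measure_mono Vspeed_greater_sets) (auto intro: finite_subset)
  qed (simp add: a_prob_def)
  finally show ?thesis .
qed

end

theorem mainTheorem10:
  fixes \<beta> t :: real and n :: nat
    and \<mu> :: "nat list set measure"
    and M :: "'w measure" and Roads :: "'w \<Rightarrow> (nat list set \<times> real) set"
    and E :: "nat list set set"
  assumes "\<beta> > 1" and "n \<ge> 1" and "t > 0"
    and "is_line_measure \<mu>"
    and "poisson_process M (road_intensity \<beta> \<mu>) Roads"
    and "E \<subseteq> pedge ` {1..n}" and "E \<noteq> {}"
  shows "a_prob M Roads t E \<le>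
    (\<Sum>F\<in>{F. F \<subseteq> E \<and> F \<noteq> {} \<and> connected_in F E}.
       measure M {\<omega>\<in>space M. Vspeed (Roads \<omega>) F \<ge> ereal (real (card E) / t)}
         * a_prob M Roads t (E - F))"
proof -
  interpret road_model \<beta> \<mu> M Roads
    using assms(4,5) by unfold_locales
  let ?parts = "{F. F \<subseteq> E \<and> F \<noteq> {} \<and> connected_in F E}"
  have E: "finite E" "E \<subseteq> range pedge"
    using assms(6) by (auto intro: finite_subset[OF _ finite_imageI[OF finite_atLeastAtMost]])
  define s where "s = real (card E) / t"
  have "0 < s"
    using E(1) assms(3,7) by (simp add: s_def card_gt_0_iff)
  have "0 \<le> s - s / (real k + 2)" "s - s / (real k + 2) < real (card E) / t" for k
    using \<open>0 < s\<close> by (simp_all add: s_def[symmetric] field_simps)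
  then have "a_prob M Roads t E \<le> (\<Sum>F\<in>?parts.
      prob {\<omega>\<in>space M. ereal (s - s / (real k + 2)) < Vspeed (Roads \<omega>) F} * a_prob M Roads t (E - F))" for k
    by (intro a_prob_le_sum_slower E assms(3,7))
  moreover have "(\<lambda>k. \<Sum>F\<in>?parts.
      prob {\<omega>\<in>space M. ereal (s - s / (real k + 2)) < Vspeed (Roads \<omega>) F} * a_prob M Roads t (E - F))
    \<longlonglongrightarrow> (\<Sum>F\<in>?parts. prob {\<omega>\<in>space M. ereal s \<le> Vspeed (Roads \<omega>) F} * a_prob M Roads t (E - F))"
    using E \<open>0 < s\<close>
    by (intro tendsto_sum tendsto_mult_right prob_ge_eq_lim_prob_greater Vspeed_greater_sets)
      (auto intro: finite_subset)
  ultimately show ?thesis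
    unfolding s_def by (intro LIMSEQ_le_const) auto
qed

end
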